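(* Let $a,b\in\mathbb{R}$ with $a<b$, let $n\in\mathbb{N}$ with $n\ge2$, and let $q\ge1$. Then $$\left|A(a^n,b^n)-L_n^n(a,b)\right|\le \frac{n(n-1)(b-a)^2}{4}\left(\frac{2}{(q+1)(q+2)}\right)^{\frac1q}\left(\max\{|a|^{(n-2)q},|b|^{(n-2)q}\}\right)^{\frac1q}.$$
   Context: $A(x,y)=\frac{x+y}{2}$ (arithmetic mean). For $a\ne b$ and $n\in\mathbb{Z}\setminus\{-1,0\}$, $L_n(a,b)=\left[\frac{b^{n+1}-a^{n+1}}{(n+1)(b-a)}\right]^{1/n}$ (generalized logarithmic mean), so $L_n^n(a,b)=\frac{b^{n+1}-a^{n+1}}{(n+1)(b-a)}$. *)

theory Defs
  imports Complex_Main
begin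

definition AM :: "real \<Rightarrow> real \<Rightarrow> real" where
  "AM x y = (x + y) / 2"

text \<open>The n-th power of the generalized logarithmic mean, for a \<noteq> b:
  L_n^n(a,b) = (b^(n+1) - a^(n+1)) / ((n+1)(b-a)).\<close>
definition Ln_pow :: "nat \<Rightarrow> real \<Rightarrow> real \<Rightarrow> real" where
  "Ln_pow n a b = (b ^ (n + 1) - a ^ (n + 1)) / ((real n + 1) * (b - a))"

end

theory Submission
  imports Defs
begin

(* For f(x) = x^n the quantity A(a^n,b^n) - L_n^n(a,b) is the error of the
   trapezoid rule for f on [a,b], divided by b - a.  The classical error estimate
   |(b-a)(f a + f b)/2 - \<integral>_a^b f| \<le> K (b-a)^3/12, where |f''| \<le> K on [a,b], is proved
   here without integrals: with F an antiderivative of f, the error function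
   E(x) = (x-a)(f a + f x)/2 - (F x - F a) satisfies E(a) = E'(a) = 0 and
   E''(x) = (x-a) f''(x)/2, so E is dominated by K (x-a)^3/12, whose first two
   derivatives also vanish at a (second_derivative_comparison).
   For f(x) = x^n this gives the bound n(n-1)(b-a)^2 M / 12 with
   M = max(|a|^(n-2), |b|^(n-2)).  The theorem follows since the q-dependent
   constant (2/((q+1)(q+2)))^(1/q) is at least 1/3 for q \<ge> 1 (equivalently
   (q+1)(q+2) \<le> 2 * 3^q), and the q-th power/q-th root around the maximum cancel. *)

lemma nonneg_from_second_derivative:
  fixes G G' G'' :: "real \<Rightarrow> real" and a b :: real
  assumes "a \<le> b"
    and dG: "\<And>x. (G has_real_derivative G' x) (at x)"
    and dG': "\<And>x. (G' has_real_derivative G'' x) (at x)"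
    and convex: "\<And>x. a \<le> x \<Longrightarrow> x \<le> b \<Longrightarrow> G'' x \<ge> 0"
    and "G a = 0" "G' a = 0"
  shows "G b \<ge> 0"
proof -
  have cont: "continuous_on S g" if "\<And>x. (g has_real_derivative g' x) (at x)" for S g g'
    using that by (meson DERIV_isCont continuous_at_imp_continuous_on)
  have G'_nonneg: "G' x \<ge> 0" if "a \<le> x" "x \<le> b" for x
  proof -
    have "G' a \<le> G' x"
    proof (rule DERIV_nonneg_imp_increasing_open[OF \<open>a \<le> x\<close> _ cont[OF dG']])
      fix y assume "a < y" "y < x"
      then show "\<exists>z. (G' has_real_derivative z) (at y) \<and> z \<ge> 0"
        using dG' convex that by (intro exI[of _ "G'' y"]) auto
    qed
    with \<open>G' a = 0\<close> show ?thesis by simp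
  qed
  have "G a \<le> G b"
  proof (rule DERIV_nonneg_imp_increasing_open[OF \<open>a \<le> b\<close> _ cont[OF dG]])
    fix y assume "a < y" "y < b"
    then show "\<exists>z. (G has_real_derivative z) (at y) \<and> z \<ge> 0"
      using dG G'_nonneg by (intro exI[of _ "G' y"]) auto
  qed
  with \<open>G a = 0\<close> show ?thesis by simp
qed

lemma second_derivative_comparison:
  fixes G G' G'' H H' H'' :: "real \<Rightarrow> real" and a b :: real
  assumes "a \<le> b"
    and dG: "\<And>x. (G has_real_derivative G' x) (at x)"
    and dG': "\<And>x. (G' has_real_derivative G'' x) (at x)"
    and dH: "\<And>x. (H has_real_derivative H' x) (at x)"
    and dH': "\<And>x. (H' has_real_derivative H'' x) (at x)"
    and dominated: "\<And>x. a \<le> x \<Longrightarrow> x \<le> b \<Longrightarrow> \<bar>G'' x\<bar> \<le> H'' x"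
    and "G a = 0" "G' a = 0" "H a = 0" "H' a = 0"
  shows "\<bar>G b\<bar> \<le> H b"
proof -
  have upper: "0 \<le> H'' x - G'' x" and lower: "0 \<le> H'' x + G'' x" if "a \<le> x" "x \<le> b" for x
    using dominated[OF that] by auto
  have "0 \<le> H b - G b"
    by (rule nonneg_from_second_derivative[of a b _ "\<lambda>x. H' x - G' x" "\<lambda>x. H'' x - G'' x"])
       (use assms upper in \<open>auto intro!: derivative_eq_intros\<close>)
  moreover have "0 \<le> H b + G b"
    by (rule nonneg_from_second_derivative[of a b _ "\<lambda>x. H' x + G' x" "\<lambda>x. H'' x + G'' x"])
       (use assms lower in \<open>auto intro!: derivative_eq_intros\<close>)
  ultimately show ?thesis by linarith
qed

lemma trapezoid_error:
  fixes F f f' f'' :: "real \<Rightarrow> real" and a b K :: real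
  assumes "a \<le> b"
    and dF: "\<And>x. (F has_real_derivative f x) (at x)"
    and df: "\<And>x. (f has_real_derivative f' x) (at x)"
    and df': "\<And>x. (f' has_real_derivative f'' x) (at x)"
    and bound: "\<And>x. a \<le> x \<Longrightarrow> x \<le> b \<Longrightarrow> \<bar>f'' x\<bar> \<le> K"
  shows "\<bar>(b - a) * (f a + f b) / 2 - (F b - F a)\<bar> \<le> K * (b - a) ^ 3 / 12"
proof -
  define E where "E x = (x - a) * (f a + f x) / 2 - (F x - F a)" for x
  define E' where "E' x = (f a + f x) / 2 + (x - a) * f' x / 2 - f x" for x
  define E'' where "E'' x = (x - a) * f'' x / 2" for x
  have dE: "(E has_real_derivative E' x) (at x)" for x
    unfolding E_def E'_def
    by (auto intro!: derivative_eq_intros dF df simp: field_simps)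
  have dE': "(E' has_real_derivative E'' x) (at x)" for x
    unfolding E'_def E''_def
    by (auto intro!: derivative_eq_intros df df' simp: field_simps)
  have E''_bound: "\<bar>E'' x\<bar> \<le> K * (x - a) / 2" if "a \<le> x" "x \<le> b" for x
  proof -
    have "\<bar>E'' x\<bar> = (x - a) * \<bar>f'' x\<bar> / 2"
      using that by (simp add: E''_def abs_mult)
    also have "\<dots> \<le> (x - a) * K / 2"
      using that bound[OF that] by (intro divide_right_mono mult_left_mono) auto
    finally show ?thesis by (simp add: mult.commute)
  qed
  have "\<bar>E b\<bar> \<le> (\<lambda>x. K * (x - a) ^ 3 / 12) b"
  proof (rule second_derivative_comparison[OF \<open>a \<le> b\<close> dE dE' _ _ E''_bound])
    show "((\<lambda>x. K * (x - a) ^ 3 / 12) has_real_derivative K * (x - a) ^ 2 / 4) (at x)" for x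
      by (auto intro!: derivative_eq_intros simp: field_simps power2_eq_square)
    show "((\<lambda>x. K * (x - a) ^ 2 / 4) has_real_derivative K * (x - a) / 2) (at x)" for x
      by (auto intro!: derivative_eq_intros simp: field_simps)
  qed (simp_all add: E_def E'_def)
  then show ?thesis by (simp add: E_def)
qed

lemma power_means_difference_bound:
  fixes a b :: real and n :: nat
  assumes "a < b" and "n \<ge> 2"
  shows "\<bar>AM (a ^ n) (b ^ n) - Ln_pow n a b\<bar>
    \<le> real n * (real n - 1) * (b - a) ^ 2 / 12 * max (\<bar>a\<bar> ^ (n - 2)) (\<bar>b\<bar> ^ (n - 2))"
proof -
  define M where "M = max (\<bar>a\<bar> ^ (n - 2)) (\<bar>b\<bar> ^ (n - 2))"
  define K where "K = real n * (real n - 1) * M"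
  have power_bound: "\<bar>x\<bar> ^ (n - 2) \<le> M" if "a \<le> x" "x \<le> b" for x
  proof (cases "x \<ge> 0")
    case True
    then have "\<bar>x\<bar> ^ (n - 2) \<le> \<bar>b\<bar> ^ (n - 2)" using that by (intro power_mono) auto
    then show ?thesis by (simp add: M_def le_max_iff_disj)
  next
    case False
    then have "\<bar>x\<bar> ^ (n - 2) \<le> \<bar>a\<bar> ^ (n - 2)" using that by (intro power_mono) auto
    then show ?thesis by (simp add: M_def le_max_iff_disj)
  qed
  have dF: "((\<lambda>x. x ^ (n + 1) / (real n + 1)) has_real_derivative x ^ n) (at x)" for x
    by (rule derivative_eq_intros refl | simp add: add.commute)+
  have df: "((\<lambda>x. x ^ n) has_real_derivative real n * x ^ (n - 1)) (at x)" for x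
    by (auto intro!: derivative_eq_intros)
  have df': "((\<lambda>x. real n * x ^ (n - 1)) has_real_derivative
      real n * (real n - 1) * x ^ (n - 2)) (at x)" for x
    using \<open>n \<ge> 2\<close> by (auto intro!: derivative_eq_intros simp: of_nat_diff numeral_2_eq_2)
  have f''_bound: "\<bar>real n * (real n - 1) * x ^ (n - 2)\<bar> \<le> K" if "a \<le> x" "x \<le> b" for x
    using power_bound[OF that] \<open>n \<ge> 2\<close>
    by (auto simp: K_def abs_mult power_abs intro!: mult_left_mono)
  \<comment> \<open>Multiplying the difference of means by b - a yields exactly the trapezoid error
    for f(x) = x^n; the normalisation is done for an abstract positive d = n + 1.\<close>
  have "(b - a) * ((a ^ n + b ^ n) / 2 - (b ^ (n + 1) - a ^ (n + 1)) / (d * (b - a)))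
      = (b - a) * (a ^ n + b ^ n) / 2 - (b ^ (n + 1) / d - a ^ (n + 1) / d)" if "d > 0" for d
    using \<open>a < b\<close> that by (simp add: field_simps)
  from this[of "real n + 1"]
  have scaled: "(b - a) * (AM (a ^ n) (b ^ n) - Ln_pow n a b)
      = (b - a) * (a ^ n + b ^ n) / 2 - (b ^ (n + 1) / (real n + 1) - a ^ (n + 1) / (real n + 1))"
    by (simp add: AM_def Ln_pow_def)
  have "(b - a) * \<bar>AM (a ^ n) (b ^ n) - Ln_pow n a b\<bar>
      = \<bar>(b - a) * (AM (a ^ n) (b ^ n) - Ln_pow n a b)\<bar>"
    using \<open>a < b\<close> by (simp add: abs_mult)
  also have "\<dots> \<le> K * (b - a) ^ 3 / 12"
    unfolding scaled using trapezoid_error[OF _ dF df df' f''_bound] \<open>a < b\<close> by simp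
  also have "\<dots> = (b - a) * (K * (b - a) ^ 2 / 12)"
    by (simp add: power3_eq_cube power2_eq_square)
  finally have "\<bar>AM (a ^ n) (b ^ n) - Ln_pow n a b\<bar> \<le> K * (b - a) ^ 2 / 12"
    using \<open>a < b\<close> by simp
  then show ?thesis by (simp add: K_def M_def mult_ac)
qed

text \<open>An exponential lower bound: (q+1)(q+2) \<le> 2 * 3^q for q \<ge> 1.  Writing q = 1 + t,
  3^q \<ge> 3 e^t = 3 (e^(t/2))^2 \<ge> 3 (1 + t/2)^2 \<ge> (t+2)(t+3)/2.\<close>
lemma product_le_two_three_powr:
  fixes q :: real
  assumes "q \<ge> 1"
  shows "(q + 1) * (q + 2) \<le> 2 * 3 powr q"
proof -
  define t where "t = q - 1"
  have "t \<ge> 0" using assms by (simp add: t_def)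
  have "1 \<le> ln (3::real)" using exp_le by (simp add: ln_ge_iff)
  then have "exp t \<le> exp (t * ln 3)"
    using \<open>t \<ge> 0\<close> by (simp add: mult_left_mono[of 1 "ln 3" t, simplified])
  also have "exp (t * ln 3) = 3 powr t" by (simp add: powr_def)
  finally have "3 * exp t \<le> 3 powr q" by (simp add: t_def powr_diff)
  moreover have "(1 + t / 2) ^ 2 \<le> exp (t / 2) ^ 2"
    using \<open>t \<ge> 0\<close> by (intro power_mono) auto
  moreover have "exp (t / 2) ^ 2 = exp t"
    by (simp add: power2_eq_square flip: exp_add)
  moreover have "(q + 1) * (q + 2) \<le> 6 * (1 + t / 2) ^ 2"
    using mult_mono[of 1 q 1 q] assms by (simp add: t_def power2_eq_square field_simps)
  ultimately show ?thesis by linarith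
qed

text \<open>The constant of the theorem is at least 1/3, so the sharp trapezoid constant
  1/12 is dominated by the stated 1/4 times this constant.\<close>
lemma means_constant_ge_one_third:
  fixes q :: real
  assumes "q \<ge> 1"
  shows "1 / 3 \<le> (2 / ((q + 1) * (q + 2))) powr (1 / q)"
proof -
  have "3 powr (- q) \<le> 2 / ((q + 1) * (q + 2))"
    using product_le_two_three_powr[OF assms] assms
    by (simp add: powr_minus divide_simps mult.commute)
  then have "(3 powr (- q)) powr (1 / q) \<le> (2 / ((q + 1) * (q + 2))) powr (1 / q)"
    using assms by (intro powr_mono2) auto
  moreover have "(3 powr (- q)) powr (1 / q) = 3 powr (- 1)"
    using assms by (simp add: powr_powr)
  moreover have "(3::real) powr (- 1) = 1 / 3" by (simp add: powr_minus)
  ultimately show ?thesis by simp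
qed

lemma max_powr_root:
  fixes x y q :: real
  assumes "x \<ge> 0" "y \<ge> 0" "q > 0"
  shows "(max (x powr q) (y powr q)) powr (1 / q) = max x y"
proof -
  have "max (x powr q) (y powr q) = (max x y) powr q"
  proof (cases "x \<le> y")
    case True
    then have "x powr q \<le> y powr q" using assms by (intro powr_mono2) auto
    with True show ?thesis by (simp add: max_def)
  next
    case False
    then have "y powr q \<le> x powr q" using assms by (intro powr_mono2) auto
    with False show ?thesis by (simp add: max_def)
  qed
  then show ?thesis using assms by (simp add: powr_powr)
qed

theorem proposition6:
  fixes a b q :: real and n :: nat
  assumes "a < b" and "n \<ge> 2" and "q \<ge> 1"
  shows "\<bar>AM (a ^ n) (b ^ n) - Ln_pow n a b\<bar>
    \<le> real n * (real n - 1) * (b - a)^2 / 4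
       * (2 / ((q + 1) * (q + 2))) powr (1 / q)
       * (max ((\<bar>a\<bar> ^ (n - 2)) powr q) ((\<bar>b\<bar> ^ (n - 2)) powr q)) powr (1 / q)"
proof -
  define M where "M = max (\<bar>a\<bar> ^ (n - 2)) (\<bar>b\<bar> ^ (n - 2))"
  define C where "C = (2 / ((q + 1) * (q + 2))) powr (1 / q)"
  define D where "D = real n * (real n - 1) * (b - a) ^ 2 / 4 * M"
  have "real n - 1 \<ge> 0" "M \<ge> 0" using \<open>n \<ge> 2\<close> by (auto simp: M_def le_max_iff_disj)
  then have "D \<ge> 0" unfolding D_def by simp
  have M_root: "M = (max ((\<bar>a\<bar> ^ (n - 2)) powr q) ((\<bar>b\<bar> ^ (n - 2)) powr q)) powr (1 / q)"
    using \<open>q \<ge> 1\<close> by (simp add: M_def max_powr_root)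
  have "\<bar>AM (a ^ n) (b ^ n) - Ln_pow n a b\<bar> \<le> D * (1 / 3)"
    using power_means_difference_bound[OF \<open>a < b\<close> \<open>n \<ge> 2\<close>] by (simp add: D_def M_def)
  also have "\<dots> \<le> D * C"
    using \<open>D \<ge> 0\<close> means_constant_ge_one_third[OF \<open>q \<ge> 1\<close>]
    by (intro mult_left_mono) (auto simp: C_def)
  finally show ?thesis by (simp add: D_def C_def M_root mult_ac)
qed

end
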